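(* Let $P$ be a finite graded poset with rank levels $P_1,\dots,P_d$ and full rank lower ideals $L_j=P_1\sqcup\cdots\sqcup P_j$ ($0\le j\le d$, $L_0=\emptyset$). Let $m\ge1$ and identify a lower ideal $I$ of $[m]\times P$ with $(I_1,\dots,I_m)$, $I_j=\{a\in P:(j,a)\in I\}$; call it full rank if every $I_j$ is one of $L_0,\dots,L_d$. Then a lower ideal $(I_1,\dots,I_m)$ of $[m]\times P$ is full rank if and only if every lower ideal in its orbit under $\mathfrak{X}_{[m]\times P}$ is full rank.
   Context: A finite poset is graded if all maximal chains have the same length; the rank function $r$ has minimal elements of rank $1$ and $r(x)=r(y)+1$ when $x$ covers $y$; $P_j=r^{-1}(j)$. $[m]\times P$ carries the product order. For a finite poset $Q$ and a lower ideal $I$, $\mathfrak{X}_Q(I)=\{y\in Q:y\le x\text{ for some }x\in\min(Q\setminus I)\}$; this is a bijection on lower ideals. *)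

theory Defs
  imports Main
begin

definition poset_on :: "'a set \<Rightarrow> ('a \<Rightarrow> 'a \<Rightarrow> bool) \<Rightarrow> bool" where
  "poset_on P le \<longleftrightarrow>
     (\<forall>x\<in>P. le x x) \<and>
     (\<forall>x\<in>P. \<forall>y\<in>P. le x y \<and> le y x \<longrightarrow> x = y) \<and>
     (\<forall>x\<in>P. \<forall>y\<in>P. \<forall>z\<in>P. le x y \<and> le y z \<longrightarrow> le x z)"

definition chain_in :: "'a set \<Rightarrow> ('a \<Rightarrow> 'a \<Rightarrow> bool) \<Rightarrow> 'a set \<Rightarrow> bool" where
  "chain_in P le C \<longleftrightarrow> C \<subseteq> P \<and> (\<forall>x\<in>C. \<forall>y\<in>C. le x y \<or> le y x)"

definition maximal_chain :: "'a set \<Rightarrow> ('a \<Rightarrow> 'a \<Rightarrow> bool) \<Rightarrow> 'a set \<Rightarrow> bool" where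
  "maximal_chain P le C \<longleftrightarrow> chain_in P le C \<and> (\<forall>D. chain_in P le D \<and> C \<subseteq> D \<longrightarrow> D = C)"

definition graded :: "'a set \<Rightarrow> ('a \<Rightarrow> 'a \<Rightarrow> bool) \<Rightarrow> bool" where
  "graded P le \<longleftrightarrow>
     (\<forall>C D. maximal_chain P le C \<and> maximal_chain P le D \<longrightarrow> card C = card D)"

definition minimals :: "('a \<Rightarrow> 'a \<Rightarrow> bool) \<Rightarrow> 'a set \<Rightarrow> 'a set" where
  "minimals le S = {x\<in>S. \<forall>y\<in>S. le y x \<longrightarrow> y = x}"

definition covers :: "'a set \<Rightarrow> ('a \<Rightarrow> 'a \<Rightarrow> bool) \<Rightarrow> 'a \<Rightarrow> 'a \<Rightarrow> bool" where
  "covers P le x y \<longleftrightarrow> x \<in> P \<and> y \<in> P \<and> le y x \<and> x \<noteq> y \<and>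
     (\<forall>z\<in>P. le y z \<and> le z x \<longrightarrow> z = y \<or> z = x)"

definition is_rank_function :: "'a set \<Rightarrow> ('a \<Rightarrow> 'a \<Rightarrow> bool) \<Rightarrow> ('a \<Rightarrow> nat) \<Rightarrow> bool" where
  "is_rank_function P le r \<longleftrightarrow>
     (\<forall>x\<in>minimals le P. r x = 1) \<and>
     (\<forall>x\<in>P. \<forall>y\<in>P. covers P le x y \<longrightarrow> r x = r y + 1)"

definition rank_of :: "'a set \<Rightarrow> ('a \<Rightarrow> nat) \<Rightarrow> nat" where
  "rank_of P r = Max (insert 0 (r ` P))"

definition full_rank_ideal :: "'a set \<Rightarrow> ('a \<Rightarrow> nat) \<Rightarrow> nat \<Rightarrow> 'a set" where
  "full_rank_ideal P r j = {x\<in>P. r x \<le> j}"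

definition lower_ideal :: "'a set \<Rightarrow> ('a \<Rightarrow> 'a \<Rightarrow> bool) \<Rightarrow> 'a set \<Rightarrow> bool" where
  "lower_ideal Q le I \<longleftrightarrow> I \<subseteq> Q \<and> (\<forall>x\<in>I. \<forall>y\<in>Q. le y x \<longrightarrow> y \<in> I)"

definition rowX :: "'a set \<Rightarrow> ('a \<Rightarrow> 'a \<Rightarrow> bool) \<Rightarrow> 'a set \<Rightarrow> 'a set" where
  "rowX Q le I = {y\<in>Q. \<exists>x\<in>minimals le (Q - I). le y x}"

definition prod_carrier :: "nat \<Rightarrow> 'a set \<Rightarrow> (nat \<times> 'a) set" where
  "prod_carrier m P = {1..m} \<times> P"

definition prod_le :: "('a \<Rightarrow> 'a \<Rightarrow> bool) \<Rightarrow> nat \<times> 'a \<Rightarrow> nat \<times> 'a \<Rightarrow> bool" where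
  "prod_le le p q \<longleftrightarrow> fst p \<le> fst q \<and> le (snd p) (snd q)"

definition slice :: "(nat \<times> 'a) set \<Rightarrow> nat \<Rightarrow> 'a set" where
  "slice I j = {a. (j, a) \<in> I}"

definition full_rank :: "nat \<Rightarrow> 'a set \<Rightarrow> ('a \<Rightarrow> nat) \<Rightarrow> (nat \<times> 'a) set \<Rightarrow> bool" where
  "full_rank m P r I \<longleftrightarrow>
     (\<forall>j\<in>{1..m}. \<exists>k\<le>rank_of P r. slice I j = full_rank_ideal P r k)"

end

theory Submission
  imports Defs
begin

text \<open>
  In a finite graded poset every maximal element has top rank, so each element lies below elements
  of every rank between its own and the top. If the rows of a lower ideal \<open>J\<close> of \<open>[m] \<times> P\<close> are
  \<open>L\<^sub>k\<^sub>1 \<supseteq> \<dots> \<supseteq> L\<^sub>k\<^sub>m\<close>, the minimal elements \<open>(j,a)\<close> of the complement are determined by \<open>j\<close> and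
  the rank of \<open>a\<close> alone (\<open>r a = k\<^sub>j + 1 \<le> k\<^sub>j\<^sub>-\<^sub>1\<close>). Hence they form whole rank levels in each row,
  and the rows of \<open>\<X>(J)\<close>, being down-closures of such levels, are again of the form \<open>L\<^sub>t\<close>.
\<close>

lemma lower_ideal_rowX:
  assumes "\<forall>x\<in>Q. \<forall>y\<in>Q. \<forall>z\<in>Q. le x y \<longrightarrow> le y z \<longrightarrow> le x z"
  shows "lower_ideal Q le (rowX Q le J)"
  using assms unfolding lower_ideal_def rowX_def minimals_def by blast

locale ranked_poset =
  fixes P :: "'a set" and le :: "'a \<Rightarrow> 'a \<Rightarrow> bool" and r :: "'a \<Rightarrow> nat"
  assumes finite_P: "finite P" and poset: "poset_on P le"
    and rank_function: "is_rank_function P le r"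
begin

lemma P_refl: "x \<in> P \<Longrightarrow> le x x"
  using poset unfolding poset_on_def by blast

lemma P_antisym: "x \<in> P \<Longrightarrow> y \<in> P \<Longrightarrow> le x y \<Longrightarrow> le y x \<Longrightarrow> x = y"
  using poset unfolding poset_on_def by blast

lemma P_trans: "x \<in> P \<Longrightarrow> y \<in> P \<Longrightarrow> z \<in> P \<Longrightarrow> le x y \<Longrightarrow> le y z \<Longrightarrow> le x z"
  using poset unfolding poset_on_def by blast

lemma rank_minimal: "x \<in> minimals le P \<Longrightarrow> r x = 1"
  using rank_function unfolding is_rank_function_def by blast

lemma rank_cover: "covers P le x y \<Longrightarrow> r x = r y + 1"
  using rank_function unfolding is_rank_function_def covers_def by blast

lemma rank_strict_mono:
  assumes "x \<in> P" "y \<in> P" "le x y" "x \<noteq> y"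
  shows "r x < r y"
  using assms
proof (induction "card {z\<in>P. le x z \<and> le z y}" arbitrary: x y rule: less_induct)
  case less
  show ?case
  proof (cases "covers P le y x")
    case True
    then show ?thesis using rank_cover by fastforce
  next
    case False
    then obtain z where z: "z \<in> P" "le x z" "le z y" "z \<noteq> x" "z \<noteq> y"
      using less.prems unfolding covers_def by blast
    have finite_interval: "finite {w\<in>P. le x w \<and> le w y}"
      using finite_P by simp
    have "{w\<in>P. le x w \<and> le w z} \<subset> {w\<in>P. le x w \<and> le w y}"
      using less.prems z P_refl P_trans P_antisym by blast
    then have "r x < r z"
      using less.hyps[OF psubset_card_mono[OF finite_interval]] less.prems z by blast
    moreover have "{w\<in>P. le z w \<and> le w y} \<subset> {w\<in>P. le x w \<and> le w y}"
      using less.prems z P_refl P_trans P_antisym by blast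
    then have "r z < r y"
      using less.hyps[OF psubset_card_mono[OF finite_interval]] less.prems z by blast
    ultimately show ?thesis by simp
  qed
qed

lemma rank_mono: "x \<in> P \<Longrightarrow> y \<in> P \<Longrightarrow> le x y \<Longrightarrow> r x \<le> r y"
  by (cases "x = y") (auto dest: rank_strict_mono)

lemma rank_le_rank_of: "x \<in> P \<Longrightarrow> r x \<le> rank_of P r"
  unfolding rank_of_def using finite_P by simp

lemma rank_ge_1:
  assumes "x \<in> P"
  shows "1 \<le> r x"
proof -
  obtain c where c: "c \<in> P" "le c x" and least: "\<And>y. y \<in> P \<Longrightarrow> le y x \<Longrightarrow> r c \<le> r y"
    using ex_has_least_nat[of "\<lambda>z. z \<in> P \<and> le z x" x r] assms P_refl by blast
  have "y = c" if y: "y \<in> P" "le y c" for y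
  proof (rule ccontr)
    assume "y \<noteq> c"
    then have "r y < r c"
      using rank_strict_mono y c(1) by blast
    moreover have "r c \<le> r y"
      using least y c assms P_trans by blast
    ultimately show False by simp
  qed
  then have "r c = 1"
    using rank_minimal c(1) unfolding minimals_def by blast
  then show ?thesis
    using rank_mono[OF c(1) assms c(2)] by simp
qed

lemma lower_cover_exists:
  assumes "x \<in> P" "1 < r x"
  shows "\<exists>c. covers P le x c"
proof -
  obtain y where "y \<in> P" "le y x" "y \<noteq> x"
    using assms rank_minimal unfolding minimals_def by fastforce
  then obtain c where c: "c \<in> P" "le c x" "c \<noteq> x"
    and greatest: "\<And>z. z \<in> P \<Longrightarrow> le z x \<Longrightarrow> z \<noteq> x \<Longrightarrow> r z \<le> r c"
    using ex_has_greatest_nat[of "\<lambda>z. z \<in> P \<and> le z x \<and> z \<noteq> x" y r "Suc (rank_of P r)"]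
      rank_le_rank_of by (auto simp: less_Suc_eq_le)
  have "covers P le x c"
    unfolding covers_def using assms c greatest rank_strict_mono by fastforce
  then show ?thesis ..
qed

lemma upper_cover_exists:
  assumes "x \<in> P" "y \<in> P" "le x y" "x \<noteq> y"
  shows "\<exists>c. covers P le c x"
proof -
  obtain c where c: "c \<in> P" "le x c" "c \<noteq> x"
    and least: "\<And>z. z \<in> P \<Longrightarrow> le x z \<Longrightarrow> z \<noteq> x \<Longrightarrow> r c \<le> r z"
    using ex_has_least_nat[of "\<lambda>z. z \<in> P \<and> le x z \<and> z \<noteq> x" y r] assms by blast
  have "covers P le c x"
    unfolding covers_def using assms c least rank_strict_mono by fastforce
  then show ?thesis ..
qed

lemma maximal_chain_insert_cover:
  assumes cover: "covers P le x c"
    and C: "maximal_chain {y\<in>P. le y c} le C" "c \<in> C"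
  shows "maximal_chain {y\<in>P. le y x} le (insert x C)"
proof -
  have x: "x \<in> P" "le c x" and c: "c \<in> P"
    using cover unfolding covers_def by auto
  have C_below: "C \<subseteq> {y\<in>P. le y c}" and C_chain: "chain_in {y\<in>P. le y c} le C"
    using C unfolding maximal_chain_def chain_in_def by auto
  have chain: "chain_in {y\<in>P. le y x} le (insert x C)"
    using C_below C_chain x c P_refl P_trans unfolding chain_in_def by blast
  have "D = insert x C" if D: "chain_in {y\<in>P. le y x} le D" "insert x C \<subseteq> D" for D
  proof -
    have "chain_in {y\<in>P. le y c} le (D \<inter> {y\<in>P. le y c})" "C \<subseteq> D \<inter> {y\<in>P. le y c}"
      using D C_below unfolding chain_in_def by auto
    then have D_below_c: "D \<inter> {y\<in>P. le y c} = C"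
      using C unfolding maximal_chain_def by blast
    have "z \<in> insert x C" if z: "z \<in> D" for z
    proof -
      have "z \<in> P" "le z x" "le z c \<or> le c z"
        using D z C unfolding chain_in_def by blast+
      then show ?thesis
        using D_below_c z cover C unfolding covers_def by blast
    qed
    then show ?thesis using D by blast
  qed
  then show ?thesis
    using chain unfolding maximal_chain_def by blast
qed

lemma maximal_chain_below:
  assumes "x \<in> P"
  shows "\<exists>C. maximal_chain {y\<in>P. le y x} le C \<and> card C = r x \<and> x \<in> C"
  using assms
proof (induction "r x" arbitrary: x rule: less_induct)
  case less
  show ?case
  proof (cases "r x = 1")
    case True
    have "y = x" if y: "y \<in> P" "le y x" for y
    proof (rule ccontr)
      assume "y \<noteq> x"
      then have "r y < r x"
        using rank_strict_mono y less.prems by blast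
      then show False
        using rank_ge_1[OF y(1)] True by simp
    qed
    then have "{y\<in>P. le y x} = {x}"
      using less.prems P_refl by blast
    moreover have "maximal_chain {x} le {x}"
      using less.prems P_refl unfolding maximal_chain_def chain_in_def by blast
    ultimately show ?thesis using True by auto
  next
    case False
    then have "1 < r x"
      using rank_ge_1[OF less.prems] by linarith
    then obtain c where cover: "covers P le x c"
      using less.prems lower_cover_exists by blast
    then have c: "c \<in> P" "r x = r c + 1" "le c x" "c \<noteq> x"
      using rank_cover unfolding covers_def by auto
    obtain C where C: "maximal_chain {y\<in>P. le y c} le C" "card C = r c" "c \<in> C"
      using less.hyps[of c] c by auto
    have C_below: "C \<subseteq> {y\<in>P. le y c}"
      using C(1) unfolding maximal_chain_def chain_in_def by blast
    then have "x \<notin> C"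
      using c less.prems P_antisym by blast
    moreover have "finite C"
      using C_below finite_P finite_subset by fastforce
    ultimately show ?thesis
      using maximal_chain_insert_cover[OF cover C(1,3)] C(2) c(2)
      by (intro exI[of _ "insert x C"]) simp
  qed
qed

lemma maximal_chain_through_maximal:
  assumes x: "x \<in> P" and maximal: "\<forall>y\<in>P. le x y \<longrightarrow> y = x"
  shows "\<exists>C. maximal_chain P le C \<and> card C = r x"
proof -
  obtain C where C: "maximal_chain {y\<in>P. le y x} le C" "card C = r x" "x \<in> C"
    using maximal_chain_below x by blast
  have "D = C" if D: "chain_in P le D" "C \<subseteq> D" for D
  proof -
    have "chain_in {y\<in>P. le y x} le D"
      using D C(3) maximal unfolding chain_in_def by blast
    then show ?thesis using D C(1) unfolding maximal_chain_def by blast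
  qed
  moreover have "chain_in P le C"
    using C(1) unfolding maximal_chain_def chain_in_def by blast
  ultimately show ?thesis
    using C(2) unfolding maximal_chain_def by blast
qed

end

locale graded_ranked_poset = ranked_poset +
  assumes graded: "graded P le"
begin

lemma rank_maximal:
  assumes x: "x \<in> P" and maximal: "\<forall>y\<in>P. le x y \<longrightarrow> y = x"
  shows "r x = rank_of P r"
proof -
  have "rank_of P r \<in> insert 0 (r ` P)"
    unfolding rank_of_def using finite_P by (intro Max_in) auto
  moreover have "rank_of P r \<noteq> 0"
    using rank_le_rank_of[OF x] rank_ge_1[OF x] by simp
  ultimately obtain w where w: "w \<in> P" "r w = rank_of P r" by auto
  then have "\<forall>y\<in>P. le w y \<longrightarrow> y = w"
    using rank_le_rank_of rank_strict_mono by fastforce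
  then obtain D where "maximal_chain P le D" "card D = r w"
    using maximal_chain_through_maximal w(1) by blast
  moreover obtain C where "maximal_chain P le C" "card C = r x"
    using maximal_chain_through_maximal x maximal by blast
  ultimately show ?thesis
    using graded w(2) unfolding graded_def by metis
qed

lemma exists_above_of_rank:
  assumes "b \<in> P" "r b \<le> t" "t \<le> rank_of P r"
  shows "\<exists>a\<in>P. le b a \<and> r a = t"
  using assms(2,3)
proof (induction t)
  case 0
  then show ?case using assms(1) P_refl by auto
next
  case (Suc t)
  show ?case
  proof (cases "r b = Suc t")
    case True
    then show ?thesis using assms(1) P_refl by auto
  next
    case False
    then obtain a where a: "a \<in> P" "le b a" "r a = t"
      using Suc by auto
    have "\<not> (\<forall>y\<in>P. le a y \<longrightarrow> y = a)"
      using rank_maximal[OF a(1)] a(3) Suc.prems(2) by auto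
    then obtain c where "covers P le c a"
      using upper_cover_exists a(1) by blast
    then have "c \<in> P" "le a c" "r c = Suc t"
      using rank_cover a(3) unfolding covers_def by auto
    then show ?thesis
      using P_trans[OF assms(1) a(1)] a(2) by blast
  qed
qed

lemma down_closure_rank_closed:
  assumes A: "A \<subseteq> P" and rank_closed: "\<And>a a'. a \<in> A \<Longrightarrow> a' \<in> P \<Longrightarrow> r a' = r a \<Longrightarrow> a' \<in> A"
  shows "{b\<in>P. \<exists>a\<in>A. le b a} = full_rank_ideal P r (Max (insert 0 (r ` A)))"
proof -
  let ?t = "Max (insert 0 (r ` A))"
  have finite_A: "finite (insert 0 (r ` A))"
    using finite_subset[OF A finite_P] by simp
  have "b \<in> {b\<in>P. \<exists>a\<in>A. le b a}" if b: "b \<in> P" "r b \<le> ?t" for b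
  proof -
    have "?t \<in> insert 0 (r ` A)"
      using finite_A by (intro Max_in) auto
    moreover have "?t \<noteq> 0"
      using rank_ge_1[OF b(1)] b(2) by linarith
    ultimately obtain a0 where "a0 \<in> A" "r a0 = ?t" by auto
    then have "?t \<le> rank_of P r"
      using A rank_le_rank_of by force
    then obtain a where "a \<in> P" "le b a" "r a = r a0"
      using exists_above_of_rank b \<open>r a0 = ?t\<close> by metis
    then show ?thesis
      using rank_closed \<open>a0 \<in> A\<close> b(1) by blast
  qed
  moreover have "r b \<le> ?t" if "b \<in> P" "a \<in> A" "le b a" for a b
    using that A rank_mono[of b a] finite_A by (meson Max_ge dual_order.trans image_eqI insertI2 subsetD)
  ultimately show ?thesis
    unfolding full_rank_ideal_def by blast
qed

end

context ranked_poset
begin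

lemma prod_le_trans:
  "\<forall>p\<in>prod_carrier m P. \<forall>q\<in>prod_carrier m P. \<forall>s\<in>prod_carrier m P.
     prod_le le p q \<longrightarrow> prod_le le q s \<longrightarrow> prod_le le p s"
proof (intro ballI impI)
  fix p q s
  assume "p \<in> prod_carrier m P" "q \<in> prod_carrier m P" "s \<in> prod_carrier m P"
    and "prod_le le p q" "prod_le le q s"
  then show "prod_le le p s"
    using P_trans[of "snd p" "snd q" "snd s"] unfolding prod_le_def prod_carrier_def by auto
qed

context
  fixes m :: nat and J :: "(nat \<times> 'a) set" and k :: "nat \<Rightarrow> nat"
  assumes J_lower: "lower_ideal (prod_carrier m P) (prod_le le) J"
    and J_rows: "\<forall>j\<in>{1..m}. slice J j = full_rank_ideal P r (k j)"
begin

lemma mem_J_iff: "j \<in> {1..m} \<Longrightarrow> (j, x) \<in> J \<longleftrightarrow> x \<in> P \<and> r x \<le> k j"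
  using J_rows unfolding slice_def full_rank_ideal_def by blast

lemma minimal_excluded_iff:
  "(j, a) \<in> minimals (prod_le le) (prod_carrier m P - J) \<longleftrightarrow>
     j \<in> {1..m} \<and> a \<in> P \<and> r a = k j + 1 \<and> (1 < j \<longrightarrow> r a \<le> k (j - 1))"
  (is "?minimal \<longleftrightarrow> ?ranks")
proof
  assume ?minimal
  then have j: "j \<in> {1..m}" "a \<in> P" "r a > k j"
    and below_in_J: "\<And>q. q \<in> prod_carrier m P \<Longrightarrow> prod_le le q (j, a) \<Longrightarrow> q \<noteq> (j, a) \<Longrightarrow> q \<in> J"
    using mem_J_iff unfolding minimals_def prod_carrier_def by auto
  have "r a \<le> k j + 1"
  proof (cases "1 < r a")
    case True
    then obtain c where "covers P le a c"
      using lower_cover_exists j(2) by blast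
    then have "(j, c) \<in> J" "r a = r c + 1"
      using below_in_J j rank_cover unfolding covers_def prod_carrier_def prod_le_def by auto
    then show ?thesis using mem_J_iff j(1) by auto
  qed simp
  moreover have "r a \<le> k (j - 1)" if "1 < j"
  proof -
    have "j - 1 \<in> {1..m}"
      using j(1) that by auto
    moreover have "(j - 1, a) \<in> J"
      using below_in_J j that P_refl unfolding prod_carrier_def prod_le_def by auto
    ultimately show ?thesis
      using mem_J_iff by blast
  qed
  ultimately show ?ranks using j by auto
next
  assume ranks: ?ranks
  have "q = (j, a)" if q: "q \<in> prod_carrier m P - J" "prod_le le q (j, a)" for q
  proof -
    obtain i b where q_def: "q = (i, b)" by fastforce
    have ib: "i \<in> {1..m}" "b \<in> P" "(i, b) \<notin> J" "i \<le> j" "le b a"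
      using q unfolding q_def prod_carrier_def prod_le_def by auto
    have rb: "r b \<le> r a"
      using rank_mono ib ranks by blast
    show ?thesis
    proof (cases "i = j")
      case True
      then have "r b = r a"
        using ib rb ranks mem_J_iff by fastforce
      then have "b = a"
        using ib ranks rank_strict_mono by fastforce
      then show ?thesis
        using True q_def by simp
    next
      case False
      then have "j - 1 \<in> {1..m}" "1 < j"
        using ib ranks by auto
      then have "(j - 1, b) \<in> J"
        using ib rb ranks mem_J_iff by fastforce
      moreover have "prod_le le (i, b) (j - 1, b)"
        using False ib P_refl unfolding prod_le_def by auto
      ultimately have "(i, b) \<in> J"
        using J_lower ib unfolding lower_ideal_def prod_carrier_def by blast
      then show ?thesis
        using ib by simp
    qed
  qed
  then show ?minimal
    using ranks mem_J_iff unfolding minimals_def prod_carrier_def by auto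
qed

end

end

context graded_ranked_poset
begin

lemma full_rank_rowX:
  assumes J_lower: "lower_ideal (prod_carrier m P) (prod_le le) J"
    and "full_rank m P r J"
  shows "full_rank m P r (rowX (prod_carrier m P) (prod_le le) J)"
  unfolding full_rank_def
proof
  obtain k where J_rows: "\<forall>j\<in>{1..m}. slice J j = full_rank_ideal P r (k j)"
    using \<open>full_rank m P r J\<close> unfolding full_rank_def by metis
  fix i assume i: "i \<in> {1..m}"
  define M where "M = minimals (prod_le le) (prod_carrier m P - J)"
  define A where "A = {a. \<exists>j\<ge>i. (j, a) \<in> M}"
  have A_P: "A \<subseteq> P"
    unfolding A_def M_def minimals_def prod_carrier_def by auto
  have "slice (rowX (prod_carrier m P) (prod_le le) J) i = {b\<in>P. \<exists>a\<in>A. le b a}"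
  proof (intro set_eqI iffI)
    fix b assume "b \<in> slice (rowX (prod_carrier m P) (prod_le le) J) i"
    then obtain q where "(i, b) \<in> prod_carrier m P" "q \<in> M" "i \<le> fst q" "le b (snd q)"
      unfolding slice_def rowX_def M_def prod_le_def by auto
    then show "b \<in> {b\<in>P. \<exists>a\<in>A. le b a}"
      unfolding A_def prod_carrier_def by (cases q) auto
  next
    fix b assume "b \<in> {b\<in>P. \<exists>a\<in>A. le b a}"
    then obtain j a where "b \<in> P" "(j, a) \<in> M" "i \<le> j" "le b a"
      unfolding A_def by blast
    then show "b \<in> slice (rowX (prod_carrier m P) (prod_le le) J) i"
      using i unfolding slice_def rowX_def M_def prod_le_def prod_carrier_def by force
  qed
  also have "\<dots> = full_rank_ideal P r (Max (insert 0 (r ` A)))"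
    using A_P minimal_excluded_iff[OF J_lower J_rows]
    by (intro down_closure_rank_closed) (auto simp: A_def M_def)
  moreover have "Max (insert 0 (r ` A)) \<le> rank_of P r"
    unfolding rank_of_def using A_P finite_P by (intro Max_mono) auto
  ultimately show "\<exists>t\<le>rank_of P r. slice (rowX (prod_carrier m P) (prod_le le) J) i = full_rank_ideal P r t"
    by blast
qed

end

theorem lemma2p6:
  fixes P :: "'a set" and le :: "'a \<Rightarrow> 'a \<Rightarrow> bool" and r :: "'a \<Rightarrow> nat"
    and m :: nat and I :: "(nat \<times> 'a) set"
  assumes "finite P" and "poset_on P le" and "graded P le"
    and "is_rank_function P le r"
    and "m \<ge> 1"
    and "lower_ideal (prod_carrier m P) (prod_le le) I"
  shows "full_rank m P r I \<longleftrightarrow>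
    (\<forall>k::nat. full_rank m P r ((rowX (prod_carrier m P) (prod_le le) ^^ k) I))"
proof
  interpret graded_ranked_poset P le r
    using assms by unfold_locales
  let ?X = "rowX (prod_carrier m P) (prod_le le)"
  assume "full_rank m P r I"
  have "lower_ideal (prod_carrier m P) (prod_le le) ((?X ^^ k) I) \<and> full_rank m P r ((?X ^^ k) I)" for k
    by (induction k) (use assms(6) \<open>full_rank m P r I\<close> full_rank_rowX lower_ideal_rowX[OF prod_le_trans] in auto)
  then show "\<forall>k. full_rank m P r ((?X ^^ k) I)" by blast
next
  assume "\<forall>k. full_rank m P r ((rowX (prod_carrier m P) (prod_le le) ^^ k) I)"
  then show "full_rank m P r I" by (metis funpow_0)
qed

end
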